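(* Let $\tau$ be a $\theta$-compatible stopping time with $\mathbb E_x\tau<\infty$ for all $x\in\mathbf X$, and let $\nu$ be a non-zero $Q$-invariant Borel measure on $\mathbf X$. Then $R^\star\nu$ is a non-zero $P$-invariant measure on $\mathbf X$, $S^\star R^\star\nu=\nu$, and $\nu$ is absolutely continuous with respect to $R^\star\nu$. Moreover, if the function $QR\mathbf 1$ is bounded on $\mathbf X$, then $R^\star\nu$ is finite if and only if $\nu$ is finite.
   Context: $\mathbf X$ complete separable metric space with Borel $\sigma$-algebra; $(X_n)$ a Markov chain, $\mathbb P_x$ its law started at $x$, $Pf(x)=\mathbb E_xf(X_1)$. $\theta$-compatible: $\mathbb P_x(\tau=0)=0$ for all $x$ and $\mathbb P_x$-a.s. $\tau\ge2\Rightarrow\tau\circ\theta=\tau-1$. For non-negative Borel $f$: $Qf(x)=\mathbb E_x[f(X_\tau)\mathbf 1_{\tau<\infty}]$, $Sf(x)=\mathbb E_x[f(X_1)\mathbf 1_{\tau=1}]$, $Rf(x)=\mathbb E_x[(f(X_0)+\dots+f(X_{\tau-1}))\mathbf 1_{\tau<\infty}]$. For a measure $m$, $S^\star m(A)=\int S\mathbf 1_A\,dm$ and $R^\star m(A)=\int R\mathbf 1_A\,dm$. A measure $m$ is $T$-invariant ($T=P$ or $Q$) if $\int T\mathbf 1_A\,dm=m(A)$ for all Borel $A$. *)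

theory Defs
  imports "HOL-Probability.Probability"
begin

text \<open>Path space: streams \<omega> = X_0 ## X_1 ## ..., with X_n \<omega> = \<omega> !! n.\<close>

abbreviation pathS :: "'a::topological_space stream measure" where
  "pathS \<equiv> stream_space borel"

text \<open>Markov chain law: P x is the law of the chain started at x, with one-step kernel K.
  The fixed-point equation characterises the Markov chain law uniquely.\<close>
definition markov_law :: "('a::topological_space \<Rightarrow> 'a measure) \<Rightarrow> ('a \<Rightarrow> 'a stream measure) \<Rightarrow> bool" where
  "markov_law K P \<longleftrightarrow>
     K \<in> borel \<rightarrow>\<^sub>M prob_algebra borel \<and>
     P \<in> borel \<rightarrow>\<^sub>M prob_algebra pathS \<and>
     (\<forall>x. P x = K x \<bind> (\<lambda>y. distr (P y) pathS (\<lambda>\<omega>. x ## \<omega>)))"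

definition nat_filtration :: "enat \<Rightarrow> 'a::topological_space stream measure" where
  "nat_filtration n = sigma (space pathS)
     {(\<lambda>\<omega>. \<omega> !! i) -` A \<inter> space pathS | i A. enat i \<le> n \<and> A \<in> sets borel}"

definition theta_compatible :: "('a::topological_space \<Rightarrow> 'a stream measure) \<Rightarrow> ('a stream \<Rightarrow> enat) \<Rightarrow> bool" where
  "theta_compatible P \<tau> \<longleftrightarrow>
     (\<forall>x. \<P>(\<omega> in P x. \<tau> \<omega> = 0) = 0) \<and>
     (\<forall>x. AE \<omega> in P x. \<tau> \<omega> \<ge> 2 \<longrightarrow> \<tau> (stl \<omega>) = \<tau> \<omega> - 1)"

definition opP :: "('a \<Rightarrow> 'a stream measure) \<Rightarrow> ('a \<Rightarrow> ennreal) \<Rightarrow> 'a \<Rightarrow> ennreal" where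
  "opP P f x = (\<integral>\<^sup>+\<omega>. f (\<omega> !! 1) \<partial>P x)"

definition opQ :: "('a \<Rightarrow> 'a stream measure) \<Rightarrow> ('a stream \<Rightarrow> enat) \<Rightarrow> ('a \<Rightarrow> ennreal) \<Rightarrow> 'a \<Rightarrow> ennreal" where
  "opQ P \<tau> f x = (\<integral>\<^sup>+\<omega>. f (\<omega> !! the_enat (\<tau> \<omega>)) * indicator {\<omega>. \<tau> \<omega> < \<infinity>} \<omega> \<partial>P x)"

definition opS :: "('a \<Rightarrow> 'a stream measure) \<Rightarrow> ('a stream \<Rightarrow> enat) \<Rightarrow> ('a \<Rightarrow> ennreal) \<Rightarrow> 'a \<Rightarrow> ennreal" where
  "opS P \<tau> f x = (\<integral>\<^sup>+\<omega>. f (\<omega> !! 1) * indicator {\<omega>. \<tau> \<omega> = 1} \<omega> \<partial>P x)"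

definition opR :: "('a \<Rightarrow> 'a stream measure) \<Rightarrow> ('a stream \<Rightarrow> enat) \<Rightarrow> ('a \<Rightarrow> ennreal) \<Rightarrow> 'a \<Rightarrow> ennreal" where
  "opR P \<tau> f x = (\<integral>\<^sup>+\<omega>. (\<Sum>i<the_enat (\<tau> \<omega>). f (\<omega> !! i)) * indicator {\<omega>. \<tau> \<omega> < \<infinity>} \<omega> \<partial>P x)"

definition star_op :: "(('a::topological_space \<Rightarrow> ennreal) \<Rightarrow> 'a \<Rightarrow> ennreal) \<Rightarrow> 'a measure \<Rightarrow> 'a measure" where
  "star_op T m = measure_of (space borel) (sets borel) (\<lambda>A. \<integral>\<^sup>+x. T (indicator A) x \<partial>m)"

definition invariant_for :: "(('a::topological_space \<Rightarrow> ennreal) \<Rightarrow> 'a \<Rightarrow> ennreal) \<Rightarrow> 'a measure \<Rightarrow> bool" where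
  "invariant_for T m \<longleftrightarrow> (\<forall>A \<in> sets borel. (\<integral>\<^sup>+x. T (indicator A) x \<partial>m) = emeasure m A)"

end

theory Submission
  imports Defs
begin

text \<open>All operators involved have the form \<open>f \<mapsto> \<^bold>E\<^sub>x \<Sum>\<^sub>i c\<^sub>i f(X\<^sub>i)\<close> for non-negative path
  weights \<open>c\<^sub>i\<close>, so they commute with monotone limits, their adjoints \<open>T\<^sup>\<star>m\<close> are measures and
  \<open>\<integral> g d(T\<^sup>\<star>m) = \<integral> T g dm\<close>. Put \<open>U f(x) = \<^bold>E\<^sub>x[f(X\<^sub>1); \<tau> \<ge> 2]\<close>. By \<open>\<theta>\<close>-compatibility and the
  Markov property, \<open>U\<^sup>n f(x) = \<^bold>E\<^sub>x[f(X\<^sub>n); n < \<tau>]\<close> and \<open>U\<^sup>n S f(x) = \<^bold>E\<^sub>x[f(X\<^sub>n\<^sub>+\<^sub>1); \<tau> = n+1]\<close>.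
  As \<open>\<tau>\<close> is a.s. finite, summing over \<open>n\<close> gives \<open>R = \<Sum>\<^sub>n U\<^sup>n\<close>, hence \<open>R = I + RU\<close> and \<open>Q = RS\<close>;
  moreover \<open>P = U + S\<close> because \<open>\<tau> \<ge> 1\<close>. For a \<open>Q\<close>-invariant \<open>\<nu>\<close> this yields
  \<open>\<integral> P\<one>\<^sub>A dR\<^sup>\<star>\<nu> = \<integral> RU\<one>\<^sub>A d\<nu> + \<integral> Q\<one>\<^sub>A d\<nu> = \<integral> (RU\<one>\<^sub>A + \<one>\<^sub>A) d\<nu> = R\<^sup>\<star>\<nu>(A)\<close> and
  \<open>S\<^sup>\<star>R\<^sup>\<star>\<nu> = Q\<^sup>\<star>\<nu> = \<nu>\<close>; \<open>R \<ge> I\<close> gives \<open>\<nu> \<le> R\<^sup>\<star>\<nu>\<close>, and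
  \<open>R\<^sup>\<star>\<nu>(\<^bold>X) = \<integral> R\<one> d\<nu> = \<integral> QR\<one> d\<nu>\<close> is finite when \<open>QR\<one>\<close> is bounded and \<open>\<nu>\<close> is finite.\<close>

definition path_op :: "('a \<Rightarrow> 'a stream measure) \<Rightarrow> (nat \<Rightarrow> 'a stream \<Rightarrow> ennreal)
    \<Rightarrow> ('a \<Rightarrow> ennreal) \<Rightarrow> 'a \<Rightarrow> ennreal" where
  "path_op P c f x = (\<integral>\<^sup>+\<omega>. (\<Sum>i. c i \<omega> * f (\<omega> !! i)) \<partial>P x)"

definition opU :: "('a \<Rightarrow> 'a stream measure) \<Rightarrow> ('a stream \<Rightarrow> enat)
    \<Rightarrow> ('a \<Rightarrow> ennreal) \<Rightarrow> 'a \<Rightarrow> ennreal" where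
  "opU P \<tau> f x = (\<integral>\<^sup>+\<omega>. f (\<omega> !! 1) * indicator {\<omega>. 2 \<le> \<tau> \<omega>} \<omega> \<partial>P x)"

lemma path_op_single:
  assumes "\<And>i \<omega>. i \<noteq> j \<Longrightarrow> c i \<omega> = 0"
  shows "path_op P c f x = (\<integral>\<^sup>+\<omega>. c j \<omega> * f (\<omega> !! j) \<partial>P x)"
  unfolding path_op_def
  by (intro nn_integral_cong) (subst suminf_finite[of "{j}"], auto simp: assms)

lemma opS_eq_path_op:
  "opS P \<tau> = path_op P (\<lambda>i \<omega>. if i = 1 then indicator {\<omega>. \<tau> \<omega> = 1} \<omega> else 0)"
  by (intro ext, subst path_op_single[where j=1]) (auto simp: opS_def mult.commute)

lemma opU_eq_path_op:
  "opU P \<tau> = path_op P (\<lambda>i \<omega>. if i = 1 then indicator {\<omega>. 2 \<le> \<tau> \<omega>} \<omega> else 0)"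
  by (intro ext, subst path_op_single[where j=1]) (auto simp: opU_def mult.commute)

lemma opQ_eq_path_op: "opQ P \<tau> = path_op P (\<lambda>i. indicator {\<omega>. \<tau> \<omega> = enat i})"
proof (intro ext)
  fix f :: "'a \<Rightarrow> ennreal" and x
  have pointwise: "f (\<omega> !! the_enat (\<tau> \<omega>)) * indicator {\<omega>. \<tau> \<omega> < \<infinity>} \<omega>
      = (\<Sum>i. indicator {\<omega>. \<tau> \<omega> = enat i} \<omega> * f (\<omega> !! i))" for \<omega>
  proof (cases "\<tau> \<omega>")
    case (enat k)
    have "(\<Sum>i. indicator {\<omega>. \<tau> \<omega> = enat i} \<omega> * f (\<omega> !! i))
        = (\<Sum>i\<in>{k}. indicator {\<omega>. \<tau> \<omega> = enat i} \<omega> * f (\<omega> !! i))"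
      by (rule suminf_finite) (auto simp: enat)
    then show ?thesis by (simp add: enat)
  qed simp
  then show "opQ P \<tau> f x = path_op P (\<lambda>i. indicator {\<omega>. \<tau> \<omega> = enat i}) f x"
    unfolding opQ_def path_op_def by (intro nn_integral_cong pointwise)
qed

lemma opR_eq_path_op: "opR P \<tau> = path_op P (\<lambda>i. indicator {\<omega>. enat i < \<tau> \<omega> \<and> \<tau> \<omega> < \<infinity>})"
proof (intro ext)
  fix f :: "'a \<Rightarrow> ennreal" and x
  have pointwise: "(\<Sum>i<the_enat (\<tau> \<omega>). f (\<omega> !! i)) * indicator {\<omega>. \<tau> \<omega> < \<infinity>} \<omega>
      = (\<Sum>i. indicator {\<omega>. enat i < \<tau> \<omega> \<and> \<tau> \<omega> < \<infinity>} \<omega> * f (\<omega> !! i))" for \<omega>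
  proof (cases "\<tau> \<omega>")
    case (enat k)
    have "(\<Sum>i. indicator {\<omega>. enat i < \<tau> \<omega> \<and> \<tau> \<omega> < \<infinity>} \<omega> * f (\<omega> !! i))
        = (\<Sum>i<k. indicator {\<omega>. enat i < \<tau> \<omega> \<and> \<tau> \<omega> < \<infinity>} \<omega> * f (\<omega> !! i))"
      by (rule suminf_finite) (auto simp: enat)
    then show ?thesis by (simp add: enat)
  qed simp
  then show "opR P \<tau> f x = path_op P (\<lambda>i. indicator {\<omega>. enat i < \<tau> \<omega> \<and> \<tau> \<omega> < \<infinity>}) f x"
    unfolding opR_def path_op_def by (intro nn_integral_cong pointwise)
qed

lemma space_star_op[simp]: "space (star_op T m) = UNIV"
  unfolding star_op_def by (simp add: space_measure_of_conv)

lemma sets_star_op[measurable_cong]: "sets (star_op T m) = sets borel"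
  using sets.sigma_sets_eq[of borel] by (simp add: star_op_def sets_measure_of_conv)

lemma space_nat_filtration: "space (nat_filtration t) = space pathS"
  unfolding nat_filtration_def
  by (rule space_measure_of) (auto dest: sets.sets_into_space[OF measurable_sets[OF measurable_snth]])

lemma sets_nat_filtration_le: "sets (nat_filtration t) \<subseteq> sets pathS"
  unfolding nat_filtration_def
  by (rule order_trans[OF sets_measure_of_conv[THEN eq_refl]])
     (auto intro!: sets.sigma_sets_subset measurable_sets[OF measurable_snth])

lemma measurable_stopping_time_nat_filtration:
  assumes "stopping_time nat_filtration \<tau>"
  shows "\<tau> \<in> pathS \<rightarrow>\<^sub>M count_space UNIV"
proof -
  have "\<tau> \<in> pathS \<rightarrow>\<^sub>M borel"
    by (rule measurable_stopping_time[OF assms sets_nat_filtration_le space_nat_filtration])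
  then show ?thesis
    unfolding measurable_count_space_eq2_countable
    using measurable_sets[OF _ borel_closed[OF closed_singleton]] by auto
qed

lemma nat_filtration_determined:
  fixes E :: "'a::topological_space stream set"
  assumes E: "E \<in> sets (nat_filtration t)" and eq: "\<And>i. enat i \<le> t \<Longrightarrow> \<omega> !! i = \<eta> !! i"
  shows "\<omega> \<in> E \<longleftrightarrow> \<eta> \<in> E"
proof -
  let ?G = "{(\<lambda>\<omega>. \<omega> !! i) -` A \<inter> space pathS | i A. enat i \<le> t \<and> A \<in> sets (borel::'a measure)}"
  have "?G \<subseteq> Pow (space pathS)" by auto
  then have "E \<in> sigma_sets (space pathS) ?G"
    using E unfolding nat_filtration_def by (simp add: sets_measure_of)
  then show ?thesis
  proof (induct rule: sigma_sets.induct)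
    case (Basic a)
    then show ?case using eq by (auto simp: space_stream_space)
  next
    case (Compl a)
    then show ?case by (auto simp: space_stream_space)
  qed auto
qed

lemma stopping_time_nat_filtration_determined:
  assumes "stopping_time nat_filtration \<tau>" and "\<And>i. enat i \<le> t \<Longrightarrow> \<omega> !! i = \<eta> !! i"
  shows "\<tau> \<omega> \<le> t \<longleftrightarrow> \<tau> \<eta> \<le> t"
proof -
  have "{\<omega> \<in> space (nat_filtration t). \<tau> \<omega> \<le> t} \<in> sets (nat_filtration t)"
    using stopping_timeD[OF assms(1), of t] by (simp add: pred_def)
  then have "{\<omega>. \<tau> \<omega> \<le> t} \<in> sets (nat_filtration t)"
    by (simp add: space_nat_filtration space_stream_space)
  from nat_filtration_determined[OF this assms(2)] show ?thesis by simp
qed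

locale path_kernel =
  fixes P :: "'a::topological_space \<Rightarrow> 'a stream measure"
  assumes measurable_kernel: "P \<in> borel \<rightarrow>\<^sub>M subprob_algebra pathS"
begin

lemma sets_kernel[measurable_cong]: "sets (P x) = sets pathS"
  using measurable_space[OF measurable_kernel, of x] by (simp add: space_subprob_algebra)

lemma space_kernel[simp]: "space (P x) = UNIV"
  using sets_eq_imp_space_eq[OF sets_kernel] by (simp add: space_stream_space)

lemma measurable_nn_integral_kernel[measurable (raw)]:
  assumes "g \<in> M \<rightarrow>\<^sub>M borel" and "F \<in> borel_measurable pathS"
  shows "(\<lambda>\<omega>. \<integral>\<^sup>+\<eta>. F \<eta> \<partial>P (g \<omega>)) \<in> borel_measurable M"
  using measurable_compose[OF measurable_kernel nn_integral_measurable_subprob_algebra[OF assms(2)]]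
  by (rule measurable_compose[OF assms(1)])

lemma AE_enat_finite:
  assumes [measurable]: "\<tau> \<in> pathS \<rightarrow>\<^sub>M count_space UNIV"
    and "(\<integral>\<^sup>+\<omega>. ennreal_of_enat (\<tau> \<omega>) \<partial>P x) < \<infinity>"
  shows "AE \<omega> in P x. \<tau> \<omega> \<noteq> \<infinity>"
proof -
  have "AE \<omega> in P x. ennreal_of_enat (\<tau> \<omega>) \<noteq> \<infinity>"
    by (rule nn_integral_noteq_infinite) (use assms(2) in auto)
  then show ?thesis
  proof eventually_elim
    case (elim \<omega>)
    then show ?case by (cases "\<tau> \<omega>") auto
  qed
qed

context
  fixes c :: "nat \<Rightarrow> 'a stream \<Rightarrow> ennreal"
  assumes measurable_coeff[measurable]: "\<And>i. c i \<in> borel_measurable pathS"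
begin

lemma measurable_path_op[measurable]:
  assumes [measurable]: "f \<in> borel_measurable borel"
  shows "path_op P c f \<in> borel_measurable borel"
  unfolding path_op_def[abs_def] by measurable

lemma path_op_add:
  assumes [measurable]: "f \<in> borel_measurable borel" "g \<in> borel_measurable borel"
  shows "path_op P c (\<lambda>x. f x + g x) x = path_op P c f x + path_op P c g x"
proof -
  have "path_op P c (\<lambda>x. f x + g x) x
      = (\<integral>\<^sup>+\<omega>. (\<Sum>i. c i \<omega> * f (\<omega> !! i)) + (\<Sum>i. c i \<omega> * g (\<omega> !! i)) \<partial>P x)"
    unfolding path_op_def by (simp add: distrib_left suminf_add[OF summableI summableI])
  also have "\<dots> = path_op P c f x + path_op P c g x"
    unfolding path_op_def by (rule nn_integral_add) auto
  finally show ?thesis .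
qed

lemma path_op_cmult:
  assumes [measurable]: "f \<in> borel_measurable borel"
  shows "path_op P c (\<lambda>x. k * f x) x = k * path_op P c f x"
proof -
  have "path_op P c (\<lambda>x. k * f x) x = (\<integral>\<^sup>+\<omega>. k * (\<Sum>i. c i \<omega> * f (\<omega> !! i)) \<partial>P x)"
    unfolding path_op_def by (simp add: mult.left_commute)
  also have "\<dots> = k * path_op P c f x"
    unfolding path_op_def by (rule nn_integral_cmult) auto
  finally show ?thesis .
qed

lemma path_op_mono: "(\<And>x. f x \<le> g x) \<Longrightarrow> path_op P c f x \<le> path_op P c g x"
  unfolding path_op_def by (intro nn_integral_mono suminf_le summableI mult_left_mono) auto

lemma path_op_SUP:
  assumes [measurable]: "\<And>i. U i \<in> borel_measurable borel" and "incseq U"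
  shows "path_op P c (\<lambda>x. SUP i. U i x) x = (SUP i. path_op P c (U i) x)"
proof -
  have incU: "U n y \<le> U (Suc n) y" for n y
    using incseq_SucD[OF \<open>incseq U\<close>, of n] by (simp add: le_fun_def)
  have "(\<Sum>i. c i \<omega> * (SUP n. U n (\<omega> !! i))) = (SUP n. \<Sum>i. c i \<omega> * U n (\<omega> !! i))" for \<omega>
    using ennreal_suminf_SUP_eq[of "\<lambda>n i. c i \<omega> * U n (\<omega> !! i)"]
    by (simp add: SUP_mult_left_ennreal incseq_SucI mult_left_mono incU)
  then have "path_op P c (\<lambda>x. SUP i. U i x) x = (\<integral>\<^sup>+\<omega>. (SUP n. \<Sum>i. c i \<omega> * U n (\<omega> !! i)) \<partial>P x)"
    unfolding path_op_def by simp
  also have "\<dots> = (SUP n. path_op P c (U n) x)"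
    unfolding path_op_def
    by (rule nn_integral_monotone_convergence_SUP)
       (auto intro!: incseq_SucI le_funI suminf_le summableI mult_left_mono incU)
  finally show ?thesis .
qed

lemma path_op_sum:
  assumes [measurable]: "\<And>n. f n \<in> borel_measurable borel"
  shows "path_op P c (\<lambda>x. \<Sum>n<(N::nat). f n x) x = (\<Sum>n<N. path_op P c (f n) x)"
proof (induction N)
  case (Suc N)
  have "path_op P c (\<lambda>x. \<Sum>n<Suc N. f n x) x = path_op P c (\<lambda>x. (\<Sum>n<N. f n x) + f N x) x"
    by simp
  also have "\<dots> = path_op P c (\<lambda>x. \<Sum>n<N. f n x) x + path_op P c (f N) x"
    by (rule path_op_add) auto
  finally show ?case using Suc by simp
qed (simp add: path_op_def)

lemma path_op_suminf:
  assumes [measurable]: "\<And>n. f n \<in> borel_measurable borel"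
  shows "path_op P c (\<lambda>x. \<Sum>n. f n x) x = (\<Sum>n. path_op P c (f n) x)"
proof -
  have "path_op P c (\<lambda>x. \<Sum>n. f n x) x = path_op P c (\<lambda>x. SUP N. (\<lambda>N x. \<Sum>n<N. f n x) N x) x"
    by (simp add: suminf_eq_SUP)
  also have "\<dots> = (SUP N. path_op P c (\<lambda>x. \<Sum>n<N. f n x) x)"
    by (rule path_op_SUP) (auto intro!: incseq_SucI le_funI)
  also have "\<dots> = (\<Sum>n. path_op P c (f n) x)"
    by (simp add: path_op_sum suminf_eq_SUP)
  finally show ?thesis .
qed

lemma emeasure_star_op_path_op:
  assumes [measurable_cong]: "sets m = sets borel" and A: "A \<in> sets borel"
  shows "emeasure (star_op (path_op P c) m) A = (\<integral>\<^sup>+x. path_op P c (indicator A) x \<partial>m)"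
  unfolding star_op_def
proof (rule emeasure_measure_of_sigma[OF sets.sigma_algebra_axioms _ _ A])
  have "(\<integral>\<^sup>+x. path_op P c (indicator {}) x \<partial>m) = (\<integral>\<^sup>+x. 0 \<partial>m)"
    by (rule nn_integral_cong) (simp add: path_op_def)
  then show "positive (sets borel) (\<lambda>A. \<integral>\<^sup>+ x. path_op P c (indicator A) x \<partial>m)"
    unfolding positive_def by simp
  show "countably_additive (sets borel) (\<lambda>A. \<integral>\<^sup>+ x. path_op P c (indicator A) x \<partial>m)"
    unfolding countably_additive_def
  proof (intro allI impI)
    fix B :: "nat \<Rightarrow> 'a set" assume B: "range B \<subseteq> sets borel" "disjoint_family B"
    have [measurable]: "\<And>i. B i \<in> sets borel" using B by auto
    have "(\<Sum>i. \<integral>\<^sup>+ x. path_op P c (indicator (B i)) x \<partial>m)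
        = (\<integral>\<^sup>+ x. (\<Sum>i. path_op P c (indicator (B i)) x) \<partial>m)"
      by (rule nn_integral_suminf[symmetric]) measurable
    also have "\<dots> = (\<integral>\<^sup>+ x. path_op P c (\<lambda>y. \<Sum>i. indicator (B i) y) x \<partial>m)"
      by (subst path_op_suminf) auto
    also have "\<dots> = (\<integral>\<^sup>+ x. path_op P c (indicator (\<Union>i. B i)) x \<partial>m)"
      using suminf_indicator[OF B(2)] by simp
    finally show "(\<Sum>i. \<integral>\<^sup>+ x. path_op P c (indicator (B i)) x \<partial>m)
        = (\<integral>\<^sup>+ x. path_op P c (indicator (\<Union> (range B))) x \<partial>m)" .
  qed
qed

lemma nn_integral_star_op_path_op:
  assumes [measurable_cong]: "sets m = sets borel" and "g \<in> borel_measurable borel"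
  shows "(\<integral>\<^sup>+x. g x \<partial>star_op (path_op P c) m) = (\<integral>\<^sup>+x. path_op P c g x \<partial>m)"
  using assms(2)
proof (induct rule: borel_measurable_induct)
  case (cong f g)
  then have "f = g" by auto
  with cong show ?case by simp
next
  case (set A)
  then show ?case
    using emeasure_star_op_path_op[OF assms(1) set] by (simp add: nn_integral_indicator sets_star_op)
next
  case (mult u k)
  note [measurable] = \<open>u \<in> borel_measurable borel\<close>
  have "(\<integral>\<^sup>+x. k * u x \<partial>star_op (path_op P c) m) = k * (\<integral>\<^sup>+x. u x \<partial>star_op (path_op P c) m)"
    by (rule nn_integral_cmult) measurable
  also have "\<dots> = (\<integral>\<^sup>+x. k * path_op P c u x \<partial>m)"
    using mult by (simp add: nn_integral_cmult)
  also have "\<dots> = (\<integral>\<^sup>+x. path_op P c (\<lambda>x. k * u x) x \<partial>m)"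
    by (simp add: path_op_cmult)
  finally show ?case .
next
  case (add u v)
  note [measurable] = \<open>u \<in> borel_measurable borel\<close> \<open>v \<in> borel_measurable borel\<close>
  have "(\<integral>\<^sup>+x. v x + u x \<partial>star_op (path_op P c) m)
      = (\<integral>\<^sup>+x. v x \<partial>star_op (path_op P c) m) + (\<integral>\<^sup>+x. u x \<partial>star_op (path_op P c) m)"
    by (rule nn_integral_add) measurable
  also have "\<dots> = (\<integral>\<^sup>+x. path_op P c v x + path_op P c u x \<partial>m)"
    using add by (simp add: nn_integral_add)
  also have "\<dots> = (\<integral>\<^sup>+x. path_op P c (\<lambda>x. v x + u x) x \<partial>m)"
    by (simp add: path_op_add)
  finally show ?case .
next
  case (seq U)
  note [measurable] = \<open>\<And>i. U i \<in> borel_measurable borel\<close>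
  have "(\<integral>\<^sup>+x. (SUP i. U i) x \<partial>star_op (path_op P c) m) = (SUP i. \<integral>\<^sup>+x. U i x \<partial>star_op (path_op P c) m)"
    unfolding SUP_apply by (rule nn_integral_monotone_convergence_SUP[OF \<open>incseq U\<close>]) measurable
  also have "\<dots> = (SUP i. \<integral>\<^sup>+x. path_op P c (U i) x \<partial>m)"
    using seq by simp
  also have "\<dots> = (\<integral>\<^sup>+x. (SUP i. path_op P c (U i) x) \<partial>m)"
    using \<open>incseq U\<close>
    by (intro nn_integral_monotone_convergence_SUP[symmetric])
       (auto intro!: incseq_SucI le_funI path_op_mono dest: incseq_SucD le_funD)
  also have "\<dots> = (\<integral>\<^sup>+x. path_op P c (SUP i. U i) x \<partial>m)"
    unfolding SUP_apply using \<open>incseq U\<close> by (simp add: path_op_SUP)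
  finally show ?case .
qed

lemma star_op_path_op_eq_self:
  assumes "sets m = sets borel" and "invariant_for (path_op P c) m"
  shows "star_op (path_op P c) m = m"
proof (rule measure_eqI)
  show "sets (star_op (path_op P c) m) = sets m"
    using assms(1) by (simp add: sets_star_op)
  fix A assume "A \<in> sets (star_op (path_op P c) m)"
  then have A: "A \<in> sets borel" by (simp add: sets_star_op)
  then show "emeasure (star_op (path_op P c) m) A = emeasure m A"
    using emeasure_star_op_path_op[OF assms(1) A] assms(2) unfolding invariant_for_def by simp
qed

lemma nn_integral_invariant_path_op:
  assumes "sets m = sets borel" and "invariant_for (path_op P c) m"
    and "g \<in> borel_measurable borel"
  shows "(\<integral>\<^sup>+x. g x \<partial>m) = (\<integral>\<^sup>+x. path_op P c g x \<partial>m)"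
  using nn_integral_star_op_path_op[OF assms(1,3)] star_op_path_op_eq_self[OF assms(1,2)] by simp

end

end

locale markov_chain =
  fixes K :: "'a::t1_space \<Rightarrow> 'a measure" and P :: "'a \<Rightarrow> 'a stream measure"
  assumes law: "markov_law K P"
begin

lemma measurable_K: "K \<in> borel \<rightarrow>\<^sub>M prob_algebra borel"
  and measurable_P: "P \<in> borel \<rightarrow>\<^sub>M prob_algebra pathS"
  and P_unfold: "P x = K x \<bind> (\<lambda>y. distr (P y) pathS (\<lambda>\<omega>. x ## \<omega>))"
  using law unfolding markov_law_def by blast+

sublocale path_kernel P
  by unfold_locales (rule measurable_prob_algebraD[OF measurable_P])

lemma prob_space_kernel: "prob_space (P x)"
  using measurable_space[OF measurable_P, of x] by (simp add: space_prob_algebra)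

lemma sets_K[measurable_cong]: "sets (K x) = sets borel"
  using measurable_space[OF measurable_K, of x] by (simp add: space_prob_algebra)

lemma nn_integral_kernel_Cons:
  assumes [measurable]: "F \<in> borel_measurable pathS"
  shows "(\<integral>\<^sup>+\<omega>. F \<omega> \<partial>P x) = (\<integral>\<^sup>+y. (\<integral>\<^sup>+\<omega>. F (x ## \<omega>) \<partial>P y) \<partial>K x)"
proof -
  have shifted: "(\<lambda>y. distr (P y) pathS (\<lambda>\<omega>. x ## \<omega>)) \<in> borel \<rightarrow>\<^sub>M subprob_algebra pathS"
    by (rule measurable_compose[OF measurable_kernel measurable_distr]) simp
  have "(\<integral>\<^sup>+\<omega>. F \<omega> \<partial>P x) = (\<integral>\<^sup>+\<omega>. F \<omega> \<partial>(K x \<bind> (\<lambda>y. distr (P y) pathS (\<lambda>\<omega>. x ## \<omega>))))"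
    by (subst P_unfold) (rule refl)
  also have "\<dots> = (\<integral>\<^sup>+y. (\<integral>\<^sup>+\<omega>. F \<omega> \<partial>distr (P y) pathS (\<lambda>\<omega>. x ## \<omega>)) \<partial>K x)"
    by (rule nn_integral_bind[OF _ measurable_compose[OF _ shifted]])
       (simp_all add: measurable_ident_sets[OF sets_K])
  also have "\<dots> = (\<integral>\<^sup>+y. (\<integral>\<^sup>+\<omega>. F (x ## \<omega>) \<partial>P y) \<partial>K x)"
    by (intro nn_integral_cong nn_integral_distr) (auto simp: measurable_ident_sets[OF sets_kernel])
  finally show ?thesis .
qed

lemma AE_snth_0: "AE \<omega> in P x. \<omega> !! 0 = x"
proof -
  have s: "{\<omega>::'a stream. \<omega> !! 0 \<noteq> x} \<in> sets pathS"
    using measurable_sets[OF measurable_snth[of 0 "borel::'a measure"], of "-{x}"]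
    by (simp add: space_stream_space vimage_def borel_open open_Compl)
  have "emeasure (P x) {\<omega>. \<omega> !! 0 \<noteq> x} = (\<integral>\<^sup>+\<omega>. indicator {\<omega>. \<omega> !! 0 \<noteq> x} \<omega> \<partial>P x)"
    using s by simp
  also have "\<dots> = (\<integral>\<^sup>+y. (\<integral>\<^sup>+\<omega>. indicator {\<omega>. \<omega> !! 0 \<noteq> x} (x ## \<omega>) \<partial>P y) \<partial>K x)"
    using s by (intro nn_integral_kernel_Cons) simp
  also have "\<dots> = 0"
    by (simp add: indicator_def)
  finally show ?thesis
    by (subst AE_iff_measurable[OF _ refl]) (use s in auto)
qed

end

lemma snth_Cons_1[simp]: "(x ## \<omega>) !! 1 = \<omega> !! 0"
  by (simp add: One_nat_def del: One_nat_def[symmetric])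

lemma enat_ge_2_iff_not_le_1: "2 \<le> (t::enat) \<longleftrightarrow> \<not> t \<le> 1"
  by (cases t) (auto simp: numeral_eq_enat one_enat_def)

text \<open>The shift identities behind \<open>\<tau> \<circ> \<theta> = \<tau> - 1\<close> on \<open>{\<tau> \<ge> 2}\<close>, for \<open>\<tau> \<noteq> 0\<close>.\<close>

lemma enat_Suc_less_shift:
  "(t::enat) \<noteq> 0 \<Longrightarrow> (2 \<le> t \<longrightarrow> s = t - 1) \<Longrightarrow> enat (Suc n) < t \<longleftrightarrow> 2 \<le> t \<and> enat n < s"
  by (cases t; cases s) (auto simp: numeral_eq_enat one_enat_def)

lemma enat_eq_Suc_Suc_shift:
  "(t::enat) \<noteq> 0 \<Longrightarrow> (2 \<le> t \<longrightarrow> s = t - 1) \<Longrightarrow> t = enat (Suc (Suc n)) \<longleftrightarrow> 2 \<le> t \<and> s = enat (Suc n)"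
  by (cases t; cases s) (auto simp: numeral_eq_enat one_enat_def)

locale markov_stopping = markov_chain K P
  for K :: "'a::t1_space \<Rightarrow> 'a measure" and P +
  fixes \<tau> :: "'a stream \<Rightarrow> enat"
  assumes stopping: "stopping_time nat_filtration \<tau>"
    and compatible: "theta_compatible P \<tau>"
    and AE_finite: "\<And>x. AE \<omega> in P x. \<tau> \<omega> \<noteq> \<infinity>"
begin

lemma measurable_tau[measurable]: "\<tau> \<in> pathS \<rightarrow>\<^sub>M count_space UNIV"
  by (rule measurable_stopping_time_nat_filtration[OF stopping])

lemma sets_tau_pred[measurable]: "{\<omega>. Q (\<tau> \<omega>)} \<in> sets pathS"
  using measurable_sets[OF measurable_tau, of "{a. Q a}"] by (simp add: space_stream_space vimage_def)

lemma measurable_opQ[measurable]: "f \<in> borel_measurable borel \<Longrightarrow> opQ P \<tau> f \<in> borel_measurable borel"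
  unfolding opQ_eq_path_op by measurable

lemma measurable_opR[measurable]: "f \<in> borel_measurable borel \<Longrightarrow> opR P \<tau> f \<in> borel_measurable borel"
  unfolding opR_eq_path_op by measurable

lemma measurable_opS[measurable]: "f \<in> borel_measurable borel \<Longrightarrow> opS P \<tau> f \<in> borel_measurable borel"
  unfolding opS_eq_path_op by measurable

lemma measurable_opU[measurable]: "f \<in> borel_measurable borel \<Longrightarrow> opU P \<tau> f \<in> borel_measurable borel"
  unfolding opU_eq_path_op by measurable

lemma AE_tau_ne_0: "AE \<omega> in P x. \<tau> \<omega> \<noteq> 0"
proof -
  interpret prob_space "P x" by (rule prob_space_kernel)
  have "measure (P x) {\<omega> \<in> space (P x). \<tau> \<omega> = 0} = 0"
    using compatible unfolding theta_compatible_def by auto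
  then have "emeasure (P x) {\<omega>. \<tau> \<omega> = 0} = 0"
    by (simp add: emeasure_eq_measure)
  then show ?thesis
    by (subst AE_iff_measurable[OF _ refl]) auto
qed

lemma AE_tau_stl: "AE \<omega> in P x. 2 \<le> \<tau> \<omega> \<longrightarrow> \<tau> (stl \<omega>) = \<tau> \<omega> - 1"
  using compatible unfolding theta_compatible_def by auto

lemma tau_ge_2_determined:
  assumes "\<omega> !! 0 = \<eta> !! 0" and "\<omega> !! 1 = \<eta> !! 1"
  shows "2 \<le> \<tau> \<omega> \<longleftrightarrow> 2 \<le> \<tau> \<eta>"
proof -
  have "\<omega> !! i = \<eta> !! i" if "enat i \<le> 1" for i
    using that assms by (cases i) (auto simp: one_enat_def)
  then show ?thesis
    unfolding enat_ge_2_iff_not_le_1 using stopping_time_nat_filtration_determined[OF stopping] by blast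
qed

text \<open>The Markov property at time 1, on the event \<open>{\<tau> \<ge> 2}\<close>; this event depends on \<open>X\<^sub>0 = x\<close>
  and \<open>X\<^sub>1\<close> only, so it can be pulled out of the inner integral over the path started at \<open>X\<^sub>1\<close>.\<close>

lemma nn_integral_stl_tau_ge_2:
  assumes [measurable]: "F \<in> borel_measurable pathS"
  shows "(\<integral>\<^sup>+\<omega>. F (stl \<omega>) * indicator {\<omega>. 2 \<le> \<tau> \<omega>} \<omega> \<partial>P x) = opU P \<tau> (\<lambda>y. \<integral>\<^sup>+\<eta>. F \<eta> \<partial>P y) x"
proof -
  have inner: "(\<integral>\<^sup>+\<omega>. F \<omega> * indicator {\<omega>. 2 \<le> \<tau> \<omega>} (x ## \<omega>) \<partial>P y)
      = (\<integral>\<^sup>+\<omega>. (\<integral>\<^sup>+\<eta>. F \<eta> \<partial>P (\<omega> !! 0)) * indicator {\<omega>. 2 \<le> \<tau> \<omega>} (x ## \<omega>) \<partial>P y)" for y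
  proof -
    define \<phi> :: ennreal where "\<phi> = indicator {\<omega>. 2 \<le> \<tau> \<omega>} (x ## y ## sconst x)"
    have ae: "AE \<omega> in P y. indicator {\<omega>. 2 \<le> \<tau> \<omega>} (x ## \<omega>) = \<phi> \<and> \<omega> !! 0 = y"
      using AE_snth_0[of y]
    proof eventually_elim
      case (elim \<omega>)
      then have "2 \<le> \<tau> (x ## \<omega>) \<longleftrightarrow> 2 \<le> \<tau> (x ## y ## sconst x)"
        by (intro tau_ge_2_determined) auto
      then show ?case using elim by (simp add: \<phi>_def indicator_def)
    qed
    have "(\<integral>\<^sup>+\<omega>. F \<omega> * indicator {\<omega>. 2 \<le> \<tau> \<omega>} (x ## \<omega>) \<partial>P y) = (\<integral>\<^sup>+\<omega>. F \<omega> * \<phi> \<partial>P y)"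
      by (rule nn_integral_cong_AE) (use ae in auto)
    also have "\<dots> = (\<integral>\<^sup>+\<eta>. F \<eta> \<partial>P y) * \<phi>"
      by (rule nn_integral_multc) measurable
    also have "\<dots> = (\<integral>\<^sup>+\<omega>. (\<integral>\<^sup>+\<eta>. F \<eta> \<partial>P y) * \<phi> \<partial>P y)"
      using prob_space.emeasure_space_1[OF prob_space_kernel] by simp
    also have "\<dots> = (\<integral>\<^sup>+\<omega>. (\<integral>\<^sup>+\<eta>. F \<eta> \<partial>P (\<omega> !! 0)) * indicator {\<omega>. 2 \<le> \<tau> \<omega>} (x ## \<omega>) \<partial>P y)"
      by (rule nn_integral_cong_AE) (use ae in auto)
    finally show ?thesis .
  qed
  have "(\<integral>\<^sup>+\<omega>. F (stl \<omega>) * indicator {\<omega>. 2 \<le> \<tau> \<omega>} \<omega> \<partial>P x)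
      = (\<integral>\<^sup>+y. \<integral>\<^sup>+\<omega>. F \<omega> * indicator {\<omega>. 2 \<le> \<tau> \<omega>} (x ## \<omega>) \<partial>P y \<partial>K x)"
    by (subst nn_integral_kernel_Cons) auto
  also have "\<dots> = (\<integral>\<^sup>+y. \<integral>\<^sup>+\<omega>. (\<integral>\<^sup>+\<eta>. F \<eta> \<partial>P (\<omega> !! 0)) * indicator {\<omega>. 2 \<le> \<tau> \<omega>} (x ## \<omega>) \<partial>P y \<partial>K x)"
    by (intro nn_integral_cong inner)
  also have "\<dots> = opU P \<tau> (\<lambda>y. \<integral>\<^sup>+\<eta>. F \<eta> \<partial>P y) x"
    unfolding opU_def by (subst nn_integral_kernel_Cons) auto
  finally show ?thesis .
qed

lemma opU_power:
  assumes [measurable]: "f \<in> borel_measurable borel"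
  shows "(opU P \<tau> ^^ n) f x = (\<integral>\<^sup>+\<omega>. f (\<omega> !! n) * indicator {\<omega>. enat n < \<tau> \<omega>} \<omega> \<partial>P x)"
proof (induction n arbitrary: x)
  case 0
  have "(\<integral>\<^sup>+\<omega>. f (\<omega> !! 0) * indicator {\<omega>. enat 0 < \<tau> \<omega>} \<omega> \<partial>P x) = (\<integral>\<^sup>+\<omega>. f x \<partial>P x)"
    by (rule nn_integral_cong_AE)
       (use AE_snth_0[of x] AE_tau_ne_0[of x] in \<open>eventually_elim, auto simp: zero_enat_def[symmetric]\<close>)
  then show ?case
    using prob_space.emeasure_space_1[OF prob_space_kernel] by simp
next
  case (Suc n)
  have "(opU P \<tau> ^^ n) f = (\<lambda>y. \<integral>\<^sup>+\<omega>. f (\<omega> !! n) * indicator {\<omega>. enat n < \<tau> \<omega>} \<omega> \<partial>P y)"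
    using Suc.IH by (rule ext)
  then have "(opU P \<tau> ^^ Suc n) f x
      = opU P \<tau> (\<lambda>y. \<integral>\<^sup>+\<omega>. f (\<omega> !! n) * indicator {\<omega>. enat n < \<tau> \<omega>} \<omega> \<partial>P y) x"
    by (simp only: funpow.simps o_apply)
  also have "\<dots> = (\<integral>\<^sup>+\<omega>. f (stl \<omega> !! n) * indicator {\<omega>. enat n < \<tau> \<omega>} (stl \<omega>)
      * indicator {\<omega>. 2 \<le> \<tau> \<omega>} \<omega> \<partial>P x)"
    by (rule nn_integral_stl_tau_ge_2[symmetric]) measurable
  also have "\<dots> = (\<integral>\<^sup>+\<omega>. f (\<omega> !! Suc n) * indicator {\<omega>. enat (Suc n) < \<tau> \<omega>} \<omega> \<partial>P x)"
    by (rule nn_integral_cong_AE)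
       (use AE_tau_ne_0[of x] AE_tau_stl[of x] in \<open>eventually_elim, auto simp: indicator_def enat_Suc_less_shift\<close>)
  finally show ?case .
qed

lemma opU_power_opS:
  assumes [measurable]: "f \<in> borel_measurable borel"
  shows "(opU P \<tau> ^^ n) (opS P \<tau> f) x
    = (\<integral>\<^sup>+\<omega>. f (\<omega> !! Suc n) * indicator {\<omega>. \<tau> \<omega> = enat (Suc n)} \<omega> \<partial>P x)"
proof (induction n arbitrary: x)
  case 0
  then show ?case by (simp add: opS_def one_enat_def)
next
  case (Suc n)
  have "(opU P \<tau> ^^ n) (opS P \<tau> f)
      = (\<lambda>y. \<integral>\<^sup>+\<omega>. f (\<omega> !! Suc n) * indicator {\<omega>. \<tau> \<omega> = enat (Suc n)} \<omega> \<partial>P y)"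
    using Suc.IH by (rule ext)
  then have "(opU P \<tau> ^^ Suc n) (opS P \<tau> f) x
      = opU P \<tau> (\<lambda>y. \<integral>\<^sup>+\<omega>. f (\<omega> !! Suc n) * indicator {\<omega>. \<tau> \<omega> = enat (Suc n)} \<omega> \<partial>P y) x"
    by (simp only: funpow.simps o_apply)
  also have "\<dots> = (\<integral>\<^sup>+\<omega>. f (stl \<omega> !! Suc n) * indicator {\<omega>. \<tau> \<omega> = enat (Suc n)} (stl \<omega>)
      * indicator {\<omega>. 2 \<le> \<tau> \<omega>} \<omega> \<partial>P x)"
    by (rule nn_integral_stl_tau_ge_2[symmetric]) measurable
  also have "\<dots> = (\<integral>\<^sup>+\<omega>. f (\<omega> !! Suc (Suc n)) * indicator {\<omega>. \<tau> \<omega> = enat (Suc (Suc n))} \<omega> \<partial>P x)"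
    by (rule nn_integral_cong_AE)
       (use AE_tau_ne_0[of x] AE_tau_stl[of x] in \<open>eventually_elim, auto simp: indicator_def enat_eq_Suc_Suc_shift\<close>)
  finally show ?case .
qed

lemma opR_eq_suminf_opU_power:
  assumes [measurable]: "f \<in> borel_measurable borel"
  shows "opR P \<tau> f x = (\<Sum>n. (opU P \<tau> ^^ n) f x)"
proof -
  have "opR P \<tau> f x = (\<Sum>n. \<integral>\<^sup>+\<omega>. indicator {\<omega>. enat n < \<tau> \<omega> \<and> \<tau> \<omega> < \<infinity>} \<omega> * f (\<omega> !! n) \<partial>P x)"
    unfolding opR_eq_path_op path_op_def by (rule nn_integral_suminf) measurable
  also have "\<dots> = (\<Sum>n. (opU P \<tau> ^^ n) f x)"
    unfolding opU_power[OF assms]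
    by (intro suminf_cong nn_integral_cong_AE)
       (use AE_finite[of x] in \<open>eventually_elim, auto simp: indicator_def\<close>)
  finally show ?thesis .
qed

lemma opQ_eq_suminf_opU_power_opS:
  assumes [measurable]: "f \<in> borel_measurable borel"
  shows "opQ P \<tau> f x = (\<Sum>n. (opU P \<tau> ^^ n) (opS P \<tau> f) x)"
proof -
  let ?q = "\<lambda>n. \<integral>\<^sup>+\<omega>. indicator {\<omega>. \<tau> \<omega> = enat n} \<omega> * f (\<omega> !! n) \<partial>P x"
  have "?q 0 = (\<integral>\<^sup>+\<omega>. 0 \<partial>P x)"
    by (rule nn_integral_cong_AE)
       (use AE_tau_ne_0[of x] in \<open>eventually_elim, auto simp: zero_enat_def[symmetric]\<close>)
  then have q0: "?q 0 = 0"
    by simp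
  have "opQ P \<tau> f x = (\<Sum>n. ?q n)"
    unfolding opQ_eq_path_op path_op_def by (rule nn_integral_suminf) measurable
  also have "\<dots> = (\<Sum>n. ?q (n + 1)) + (\<Sum>n<1. ?q n)"
    by (rule suminf_offset) (rule summableI)
  also have "(\<Sum>n<1. ?q n) = 0"
    using q0 by simp
  finally show ?thesis
    by (simp add: opU_power_opS mult.commute)
qed

lemma opQ_eq_opR_opS:
  assumes [measurable]: "f \<in> borel_measurable borel"
  shows "opQ P \<tau> f x = opR P \<tau> (opS P \<tau> f) x"
  by (simp add: opQ_eq_suminf_opU_power_opS opR_eq_suminf_opU_power)

lemma opR_add:
  assumes [measurable]: "f \<in> borel_measurable borel" "g \<in> borel_measurable borel"
  shows "opR P \<tau> (\<lambda>y. f y + g y) x = opR P \<tau> f x + opR P \<tau> g x"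
  unfolding opR_eq_path_op by (rule path_op_add) measurable

lemma opR_unfold:
  assumes [measurable]: "f \<in> borel_measurable borel"
  shows "opR P \<tau> f x = f x + opR P \<tau> (opU P \<tau> f) x"
proof -
  have "opR P \<tau> f x = (\<Sum>n. (opU P \<tau> ^^ (n + 1)) f x) + (\<Sum>n<1. (opU P \<tau> ^^ n) f x)"
    unfolding opR_eq_suminf_opU_power[OF assms] by (rule suminf_offset) (rule summableI)
  also have "\<dots> = (\<Sum>n. (opU P \<tau> ^^ n) (opU P \<tau> f) x) + f x"
    by (simp add: funpow_Suc_right del: funpow.simps)
  finally show ?thesis
    by (simp add: opR_eq_suminf_opU_power add.commute)
qed

lemma opP_eq_opU_add_opS:
  assumes [measurable]: "f \<in> borel_measurable borel"
  shows "opP P f x = opU P \<tau> f x + opS P \<tau> f x"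
proof -
  have "opU P \<tau> f x + opS P \<tau> f x
      = (\<integral>\<^sup>+\<omega>. f (\<omega> !! 1) * indicator {\<omega>. 2 \<le> \<tau> \<omega>} \<omega> + f (\<omega> !! 1) * indicator {\<omega>. \<tau> \<omega> = 1} \<omega> \<partial>P x)"
    unfolding opU_def opS_def by (rule nn_integral_add[symmetric]) measurable
  also have "\<dots> = opP P f x"
    unfolding opP_def
  proof (rule nn_integral_cong_AE[OF eventually_mono[OF AE_tau_ne_0[of x]]])
    fix \<omega> assume "\<tau> \<omega> \<noteq> 0"
    then have "2 \<le> \<tau> \<omega> \<longleftrightarrow> \<tau> \<omega> \<noteq> 1"
      by (cases "\<tau> \<omega>") (auto simp: numeral_eq_enat one_enat_def zero_enat_def)
    then show "f (\<omega> !! 1) * indicator {\<omega>. 2 \<le> \<tau> \<omega>} \<omega> + f (\<omega> !! 1) * indicator {\<omega>. \<tau> \<omega> = 1} \<omega>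
        = f (\<omega> !! 1)"
      by (auto simp: indicator_def)
  qed
  finally show ?thesis ..
qed

lemma nn_integral_star_opR:
  assumes "sets m = sets borel" and "g \<in> borel_measurable borel"
  shows "(\<integral>\<^sup>+x. g x \<partial>star_op (opR P \<tau>) m) = (\<integral>\<^sup>+x. opR P \<tau> g x \<partial>m)"
  unfolding opR_eq_path_op by (rule nn_integral_star_op_path_op[OF _ assms]) measurable

lemma emeasure_star_opS:
  assumes "sets m = sets borel" and "A \<in> sets borel"
  shows "emeasure (star_op (opS P \<tau>) m) A = (\<integral>\<^sup>+x. opS P \<tau> (indicator A) x \<partial>m)"
  unfolding opS_eq_path_op by (rule emeasure_star_op_path_op[OF _ assms]) measurable

lemma emeasure_le_star_opR:
  assumes [measurable_cong]: "sets m = sets borel" and [measurable]: "A \<in> sets borel"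
  shows "emeasure m A \<le> emeasure (star_op (opR P \<tau>) m) A"
proof -
  have "emeasure m A = (\<integral>\<^sup>+x. indicator A x \<partial>m)"
    by simp
  also have "\<dots> \<le> (\<integral>\<^sup>+x. opR P \<tau> (indicator A) x \<partial>m)"
    by (intro nn_integral_mono) (subst opR_unfold, auto)
  also have "\<dots> = emeasure (star_op (opR P \<tau>) m) A"
    using nn_integral_star_opR[OF assms(1), of "indicator A"] by (simp add: sets_star_op)
  finally show ?thesis .
qed

lemma absolutely_continuous_star_opR:
  assumes "sets m = sets borel"
  shows "absolutely_continuous (star_op (opR P \<tau>) m) m"
  unfolding absolutely_continuous_def
proof
  fix A assume "A \<in> null_sets (star_op (opR P \<tau>) m)"
  then have "A \<in> sets borel" and "emeasure (star_op (opR P \<tau>) m) A = 0"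
    by (auto simp: sets_star_op)
  moreover from this have "emeasure m A = 0"
    using emeasure_le_star_opR[OF assms] by (metis le_zero_eq)
  ultimately show "A \<in> null_sets m"
    using assms by (simp add: null_sets_def)
qed

context
  fixes \<nu> :: "'a measure"
  assumes sets_\<nu>[measurable_cong]: "sets \<nu> = sets borel"
    and Q_invariant: "invariant_for (opQ P \<tau>) \<nu>"
begin

lemma nn_integral_opQ_invariant:
  assumes "g \<in> borel_measurable borel"
  shows "(\<integral>\<^sup>+x. g x \<partial>\<nu>) = (\<integral>\<^sup>+x. opQ P \<tau> g x \<partial>\<nu>)"
  using Q_invariant unfolding opQ_eq_path_op
  by (intro nn_integral_invariant_path_op[OF _ sets_\<nu> _ assms]) measurable

lemma invariant_opP_star_opR: "invariant_for (opP P) (star_op (opR P \<tau>) \<nu>)"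
  unfolding invariant_for_def
proof
  fix A :: "'a set" assume [measurable]: "A \<in> sets borel"
  have R_unfold: "opR P \<tau> (indicator A) x = indicator A x + opR P \<tau> (opU P \<tau> (indicator A)) x" for x
    by (rule opR_unfold) measurable
  have "opP P (indicator A) = (\<lambda>y. opU P \<tau> (indicator A) y + opS P \<tau> (indicator A) y)"
    by (rule ext) (rule opP_eq_opU_add_opS, measurable)
  then have "(\<integral>\<^sup>+x. opP P (indicator A) x \<partial>star_op (opR P \<tau>) \<nu>)
      = (\<integral>\<^sup>+x. opR P \<tau> (\<lambda>y. opU P \<tau> (indicator A) y + opS P \<tau> (indicator A) y) x \<partial>\<nu>)"
    by (simp add: nn_integral_star_opR[OF sets_\<nu>])
  also have "\<dots> = (\<integral>\<^sup>+x. opR P \<tau> (opU P \<tau> (indicator A)) x + opQ P \<tau> (indicator A) x \<partial>\<nu>)"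
    by (intro nn_integral_cong) (simp add: opR_add opQ_eq_opR_opS)
  also have "\<dots> = (\<integral>\<^sup>+x. opR P \<tau> (opU P \<tau> (indicator A)) x \<partial>\<nu>) + (\<integral>\<^sup>+x. indicator A x \<partial>\<nu>)"
    by (simp add: nn_integral_add nn_integral_opQ_invariant[of "indicator A", symmetric])
  also have "\<dots> = (\<integral>\<^sup>+x. opR P \<tau> (opU P \<tau> (indicator A)) x + indicator A x \<partial>\<nu>)"
    by (rule nn_integral_add[symmetric]) measurable
  also have "\<dots> = (\<integral>\<^sup>+x. opR P \<tau> (indicator A) x \<partial>\<nu>)"
    by (simp add: R_unfold add.commute)
  also have "\<dots> = emeasure (star_op (opR P \<tau>) \<nu>) A"
    using nn_integral_star_opR[OF sets_\<nu>, of "indicator A"] by (simp add: sets_star_op)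
  finally show "(\<integral>\<^sup>+x. opP P (indicator A) x \<partial>star_op (opR P \<tau>) \<nu>) = emeasure (star_op (opR P \<tau>) \<nu>) A" .
qed

lemma star_opS_star_opR: "star_op (opS P \<tau>) (star_op (opR P \<tau>) \<nu>) = \<nu>"
proof (rule measure_eqI)
  show "sets (star_op (opS P \<tau>) (star_op (opR P \<tau>) \<nu>)) = sets \<nu>"
    by (simp add: sets_star_op sets_\<nu>)
  fix A assume "A \<in> sets (star_op (opS P \<tau>) (star_op (opR P \<tau>) \<nu>))"
  then have [measurable]: "A \<in> sets borel" by (simp add: sets_star_op)
  have "emeasure (star_op (opS P \<tau>) (star_op (opR P \<tau>) \<nu>)) A
      = (\<integral>\<^sup>+x. opS P \<tau> (indicator A) x \<partial>star_op (opR P \<tau>) \<nu>)"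
    by (rule emeasure_star_opS) (auto simp: sets_star_op)
  also have "\<dots> = (\<integral>\<^sup>+x. opQ P \<tau> (indicator A) x \<partial>\<nu>)"
    by (simp add: nn_integral_star_opR[OF sets_\<nu>] opQ_eq_opR_opS)
  also have "\<dots> = emeasure \<nu> A"
    by (simp add: nn_integral_opQ_invariant[of "indicator A", symmetric])
  finally show "emeasure (star_op (opS P \<tau>) (star_op (opR P \<tau>) \<nu>)) A = emeasure \<nu> A" .
qed

lemma star_opR_finite_iff:
  assumes bounded: "\<forall>x. opQ P \<tau> (opR P \<tau> (\<lambda>_. 1)) x \<le> ennreal C"
  shows "emeasure (star_op (opR P \<tau>) \<nu>) UNIV < \<infinity> \<longleftrightarrow> emeasure \<nu> UNIV < \<infinity>"
proof
  assume "emeasure (star_op (opR P \<tau>) \<nu>) UNIV < \<infinity>"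
  then show "emeasure \<nu> UNIV < \<infinity>"
    using emeasure_le_star_opR[OF sets_\<nu>, of UNIV] by auto
next
  assume finite: "emeasure \<nu> UNIV < \<infinity>"
  have "emeasure (star_op (opR P \<tau>) \<nu>) UNIV = (\<integral>\<^sup>+x. opR P \<tau> (\<lambda>_. 1) x \<partial>\<nu>)"
    using nn_integral_star_opR[OF sets_\<nu>, of "\<lambda>_. 1"] by simp
  also have "\<dots> = (\<integral>\<^sup>+x. opQ P \<tau> (opR P \<tau> (\<lambda>_. 1)) x \<partial>\<nu>)"
    by (rule nn_integral_opQ_invariant) measurable
  also have "\<dots> \<le> (\<integral>\<^sup>+x. ennreal C \<partial>\<nu>)"
    by (intro nn_integral_mono) (use bounded in auto)
  also have "\<dots> < \<infinity>"
    using finite sets_eq_imp_space_eq[OF sets_\<nu>] by (simp add: ennreal_mult_less_top)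
  finally show "emeasure (star_op (opR P \<tau>) \<nu>) UNIV < \<infinity>" .
qed

end

end

theorem mainTheorem9:
  fixes K :: "'a::polish_space \<Rightarrow> 'a measure"
    and P :: "'a \<Rightarrow> 'a stream measure"
    and \<tau> :: "'a stream \<Rightarrow> enat"
    and \<nu> :: "'a measure"
  assumes chain: "markov_law K P"
    and stop: "stopping_time nat_filtration \<tau>"
    and compat: "theta_compatible P \<tau>"
    and int_tau: "\<And>x. (\<integral>\<^sup>+\<omega>. ennreal_of_enat (\<tau> \<omega>) \<partial>P x) < \<infinity>"
    and nu_borel: "sets \<nu> = sets borel"
    and nu_nonzero: "emeasure \<nu> (space \<nu>) \<noteq> 0"
    and nu_inv: "invariant_for (opQ P \<tau>) \<nu>"
  shows "invariant_for (opP P) (star_op (opR P \<tau>) \<nu>)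
       \<and> emeasure (star_op (opR P \<tau>) \<nu>) (space (star_op (opR P \<tau>) \<nu>)) \<noteq> 0
       \<and> star_op (opS P \<tau>) (star_op (opR P \<tau>) \<nu>) = \<nu>
       \<and> absolutely_continuous (star_op (opR P \<tau>) \<nu>) \<nu>
       \<and> ((\<exists>C::real. \<forall>x. opQ P \<tau> (opR P \<tau> (\<lambda>_. 1)) x \<le> ennreal C) \<longrightarrow>
            (emeasure (star_op (opR P \<tau>) \<nu>) (space (star_op (opR P \<tau>) \<nu>)) < \<infinity>
             \<longleftrightarrow> emeasure \<nu> (space \<nu>) < \<infinity>))"
proof -
  interpret markov_chain K P
    using chain by unfold_locales
  have "AE \<omega> in P x. \<tau> \<omega> \<noteq> \<infinity>" for x
    using measurable_stopping_time_nat_filtration[OF stop] int_tau by (rule AE_enat_finite)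
  then interpret markov_stopping K P \<tau>
    using stop compat by unfold_locales
  have space_\<nu>: "space \<nu> = UNIV"
    using sets_eq_imp_space_eq[OF nu_borel] by simp
  have "emeasure \<nu> UNIV \<le> emeasure (star_op (opR P \<tau>) \<nu>) UNIV"
    using emeasure_le_star_opR[OF nu_borel] by simp
  then show ?thesis
    using nu_nonzero invariant_opP_star_opR[OF nu_borel nu_inv] star_opS_star_opR[OF nu_borel nu_inv]
      absolutely_continuous_star_opR[OF nu_borel] star_opR_finite_iff[OF nu_borel nu_inv]
    by (auto simp: space_\<nu>)
qed

end
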